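(* Let $((P,\omega),B)\in \mathrm{Gr}^{\rm po}_{2,1}(\Gamma_{\mathbb R})\times\Gamma_{\mathbb R}$ with $\omega,B\in\Gamma'_{\mathbb R}\oplus\mathbb R v$. Then there is $\sigma\in\Gamma_{\mathbb C}$ with $P=P_\sigma$, $\langle\mathrm{Im}(\sigma),v\rangle=0$ and $\langle\mathrm{Re}(\sigma),v\rangle\neq0$. Define $$\sigma^{\vee}:=\frac{1}{\langle \mathrm{Re}(\sigma),v\rangle}\Big(\mathrm{pr}(B+i\omega)-\tfrac12(B+i\omega)^2v+v^*\Big),$$ $$B^{\vee}+i\omega^{\vee}:=\frac{1}{\langle \mathrm{Re}(\sigma),v\rangle}\Big(\mathrm{pr}(\sigma)-\langle\sigma,B\rangle v\Big),$$ with $B^\vee,\omega^\vee\in\Gamma_{\mathbb R}$. Then: - $((P_{\sigma^\vee},\omega^\vee),B^\vee)\in \mathrm{Gr}^{\rm po}_{2,1}(\Gamma_{\mathbb R})\times\Gamma_{\mathbb R}$; - $\tilde\xi(\gamma((P,\omega),B))=\gamma((P_{\sigma^\vee},\omega^\vee),B^\vee)$. In particular, the $\tilde\xi$-mirror of a point of $\gamma(\mathrm{Gr}^{\rm po}_{2,1}(\Gamma_{\mathbb R})\times\Gamma_{\mathbb R})$ satisfying these hypotheses again lies in $\gamma(\mathrm{Gr}^{\rm po}_{2,1}(\Gamma_{\mathbb R})\times\Gamma_{\mathbb R})$.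
   Context: $\Gamma$ is a lattice of signature $(3,b-3)$ with a fixed orthogonal splitting $\Gamma=\Gamma'\oplus U'$, where $U'$ is a hyperbolic plane. $U$ is a further hyperbolic plane with standard basis $(w,w^* )$ ($w^2={w^*}^2=0$, $\langle w,w^*\rangle=1$). An isometry $U'\cong U$ is fixed, and $(v,v^* )$ is the basis of $U'$ corresponding to $(w,w^* )$. $\mathrm{pr}:\Gamma_{\mathbb R}\to\Gamma'_{\mathbb R}$ is the orthogonal projection, extended complex-linearly. The form is extended complex-bilinearly to $\Gamma_{\mathbb C}$. For $\sigma\in\Gamma_{\mathbb C}$ with $\sigma^2=0$ and $(\sigma+\bar\sigma)^2>0$, $P_\sigma$ is the plane spanned by $\mathrm{Re}\,\sigma,\mathrm{Im}\,\sigma$, oriented by this basis. $\mathrm{Gr}^{\rm po}_{2,1}(\Gamma_{\mathbb R})=\{(P,\omega): P$ an oriented positive definite plane in $\Gamma_{\mathbb R}$, $\omega\in P^\perp$, $\omega^2>0\}$. $\mathrm{Gr}^{\rm po}_{2,2}(\Gamma_{\mathbb R}\oplus U_{\mathbb R})$ is the set of pairs $(H_1,H_2)$ of orthogonal oriented positive definite planes in $\Gamma_{\mathbb R}\oplus U_{\mathbb R}$. The map $\gamma:\mathrm{Gr}^{\rm po}_{2,1}(\Gamma_{\mathbb R})\times\Gamma_{\mathbb R}\to \mathrm{Gr}^{\rm po}_{2,2}(\Gamma_{\mathbb R}\oplus U_{\mathbb R})$ sends $((P,\omega),B)$ to $(H_1,H_2)$ where: - $H_1=\{x-\langle x,B\rangle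 w: x\in P\}$, oriented via $P$; - $H_2$ has the ordered basis $\big(\tfrac12(\omega^2-B^2)w+w^*+B,\ \omega-\langle\omega,B\rangle w\big)$. $\xi\in \mathrm O(\Gamma\oplus U)$ is the identity on $\Gamma'$ and interchanges $U$ and $U'$: $v\leftrightarrow w$, $v^*\leftrightarrow w^*$. $\iota(H_1,H_2)=(H_2,H_1)$. The mirror map is $\tilde\xi=\iota\circ\xi$, acting on $\mathrm{Gr}^{\rm po}_{2,2}(\Gamma_{\mathbb R}\oplus U_{\mathbb R})$. *)

theory Defs
  imports "HOL-Analysis.Analysis"
begin

text \<open>Gamma'_R is a finite-dimensional real vector space 'a carrying a symmetric
bilinear form g.  Gamma_R = Gamma'_R (+) U'_R is modelled as 'a \<times> real \<times> real, where
(x,s,t) stands for x + s v + t v*.  Gamma_R (+) U_R is modelled as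
('a \<times> real \<times> real) \<times> real \<times> real, where (y,p,r) stands for y + p w + r w*.
Complex vectors (elements of the complexification) are pairs (Re, Im) of real vectors.\<close>

type_synonym 'a gam = "'a \<times> real \<times> real"
type_synonym 'a gamU = "'a gam \<times> real \<times> real"

definition gam_form :: "('a \<Rightarrow> 'a \<Rightarrow> real) \<Rightarrow> 'a gam \<Rightarrow> 'a gam \<Rightarrow> real" where
  "gam_form g u u' = g (fst u) (fst u') + fst (snd u) * snd (snd u') + snd (snd u) * fst (snd u')"

definition gamU_form :: "('a \<Rightarrow> 'a \<Rightarrow> real) \<Rightarrow> 'a gamU \<Rightarrow> 'a gamU \<Rightarrow> real" where
  "gamU_form g u u' = gam_form g (fst u) (fst u') + fst (snd u) * snd (snd u') + snd (snd u) * fst (snd u')"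

definition vv :: "'a::zero gam" where "vv = (0, 1, 0)"
definition vs :: "'a::zero gam" where "vs = (0, 0, 1)"
definition ww :: "'a::zero gamU" where "ww = (0, 1, 0)"
definition ws :: "'a::zero gamU" where "ws = (0, 0, 1)"

definition pr :: "'a::zero gam \<Rightarrow> 'a gam" where "pr u = (fst u, 0, 0)"

definition incl :: "'a::zero gam \<Rightarrow> 'a gamU" where "incl x = (x, 0, 0)"

definition pos_def_sub :: "('v \<Rightarrow> 'v \<Rightarrow> real) \<Rightarrow> 'v::real_vector set \<Rightarrow> bool" where
  "pos_def_sub q V \<longleftrightarrow> subspace V \<and> (\<forall>x\<in>V. x \<noteq> 0 \<longrightarrow> q x x > 0)"

definition neg_def_sub :: "('v \<Rightarrow> 'v \<Rightarrow> real) \<Rightarrow> 'v::real_vector set \<Rightarrow> bool" where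
  "neg_def_sub q V \<longleftrightarrow> subspace V \<and> (\<forall>x\<in>V. x \<noteq> 0 \<longrightarrow> q x x < 0)"

definition has_signature :: "('v::euclidean_space \<Rightarrow> 'v \<Rightarrow> real) \<Rightarrow> nat \<Rightarrow> nat \<Rightarrow> bool" where
  "has_signature q p m \<longleftrightarrow>
     (\<forall>x. (\<forall>y. q x y = 0) \<longrightarrow> x = 0) \<and>
     (\<exists>V. pos_def_sub q V \<and> dim V = p) \<and> (\<forall>V. pos_def_sub q V \<longrightarrow> dim V \<le> p) \<and>
     (\<exists>V. neg_def_sub q V \<and> dim V = m) \<and> (\<forall>V. neg_def_sub q V \<longrightarrow> dim V \<le> m)"

text \<open>An oriented plane is represented by its orientation class of ordered bases.\<close>
definition oplane :: "'v::real_vector \<Rightarrow> 'v \<Rightarrow> ('v \<times> 'v) set" where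
  "oplane e1 e2 = {(f1, f2). \<exists>a b c d. f1 = a *\<^sub>R e1 + b *\<^sub>R e2 \<and> f2 = c *\<^sub>R e1 + d *\<^sub>R e2
                                 \<and> a * d - b * c > 0}"

definition pos_oplane :: "('v \<Rightarrow> 'v \<Rightarrow> real) \<Rightarrow> ('v::real_vector \<times> 'v) set \<Rightarrow> bool" where
  "pos_oplane q P \<longleftrightarrow> (\<exists>e1 e2. (\<forall>a b. a *\<^sub>R e1 + b *\<^sub>R e2 = 0 \<longrightarrow> a = 0 \<and> b = 0)
       \<and> P = oplane e1 e2 \<and> (\<forall>x\<in>span {e1, e2}. x \<noteq> 0 \<longrightarrow> q x x > 0))"

definition perp_oplane :: "('v \<Rightarrow> 'v \<Rightarrow> real) \<Rightarrow> 'v \<Rightarrow> ('v \<times> 'v) set \<Rightarrow> bool" where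
  "perp_oplane q x P \<longleftrightarrow> (\<forall>f\<in>P. q x (fst f) = 0 \<and> q x (snd f) = 0)"

definition Gr21 :: "('v \<Rightarrow> 'v \<Rightarrow> real) \<Rightarrow> (('v::real_vector \<times> 'v) set \<times> 'v) set" where
  "Gr21 q = {(P, \<omega>). pos_oplane q P \<and> perp_oplane q \<omega> P \<and> q \<omega> \<omega> > 0}"

definition map_oplane :: "('v \<Rightarrow> 'w) \<Rightarrow> ('v \<times> 'v) set \<Rightarrow> ('w \<times> 'w) set" where
  "map_oplane f P = (\<lambda>e. (f (fst e), f (snd e))) ` P"

definition cform :: "('v \<Rightarrow> 'v \<Rightarrow> real) \<Rightarrow> 'v \<times> 'v \<Rightarrow> 'v \<times> 'v \<Rightarrow> complex" where
  "cform q x y = Complex (q (fst x) (fst y) - q (snd x) (snd y)) (q (fst x) (snd y) + q (snd x) (fst y))"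

definition cscale :: "complex \<Rightarrow> 'v::real_vector \<times> 'v \<Rightarrow> 'v \<times> 'v" where
  "cscale z x = (Re z *\<^sub>R fst x - Im z *\<^sub>R snd x, Re z *\<^sub>R snd x + Im z *\<^sub>R fst x)"

definition creal :: "'v::zero \<Rightarrow> 'v \<times> 'v" where "creal x = (x, 0)"

definition cpr :: "'a::zero gam \<times> 'a gam \<Rightarrow> 'a gam \<times> 'a gam" where
  "cpr x = (pr (fst x), pr (snd x))"

text \<open>sigma with sigma^2 = 0 and (sigma + conj sigma)^2 > 0\<close>
definition period_ok :: "('v \<Rightarrow> 'v \<Rightarrow> real) \<Rightarrow> 'v::real_vector \<times> 'v \<Rightarrow> bool" where
  "period_ok q \<sigma> \<longleftrightarrow> cform q \<sigma> \<sigma> = 0 \<and> q (2 *\<^sub>R fst \<sigma>) (2 *\<^sub>R fst \<sigma>) > 0"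

definition P_sigma :: "'v \<times> 'v \<Rightarrow> ('v::real_vector \<times> 'v) set" where
  "P_sigma \<sigma> = oplane (fst \<sigma>) (snd \<sigma>)"

definition gamma :: "('a::real_vector \<Rightarrow> 'a \<Rightarrow> real) \<Rightarrow> (('a gam \<times> 'a gam) set \<times> 'a gam) \<times> 'a gam
                     \<Rightarrow> ('a gamU \<times> 'a gamU) set \<times> ('a gamU \<times> 'a gamU) set" where
  "gamma g PwB = (let P = fst (fst PwB); \<omega> = snd (fst PwB); B = snd PwB; q = gam_form g in
     (map_oplane (\<lambda>x. incl x - q x B *\<^sub>R ww) P,
      oplane ((1/2 * (q \<omega> \<omega> - q B B)) *\<^sub>R ww + ws + incl B) (incl \<omega> - q \<omega> B *\<^sub>R ww)))"

text \<open>xi: identity on Gamma', v <-> w, v* <-> w*\<close>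
definition xi :: "'a gamU \<Rightarrow> 'a gamU" where
  "xi u = ((fst (fst u), fst (snd u), snd (snd u)), fst (snd (fst u)), snd (snd (fst u)))"

definition mirror :: "('a gamU \<times> 'a gamU) set \<times> ('a gamU \<times> 'a gamU) set
                      \<Rightarrow> ('a gamU \<times> 'a gamU) set \<times> ('a gamU \<times> 'a gamU) set" where
  "mirror H = (map_oplane xi (snd H), map_oplane xi (fst H))"

end

theory Submission
  imports Defs
begin

text \<open>Since \<open>\<omega>\<close> has no \<open>v\<^sup>*\<close>-component, the isotropic vector \<open>v\<close> is orthogonal to \<open>\<omega>\<close>.
  Were it orthogonal to \<open>P\<close> as well, then \<open>v + \<epsilon> y\<close>, for \<open>y\<close> orthogonal to \<open>P + \<real>\<omega>\<close> with
  \<open>\<langle>v, y\<rangle> \<noteq> 0\<close> and suitable \<open>\<epsilon>\<close>, would extend \<open>P + \<real>\<omega>\<close> to a positive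
  definite subspace of dimension 4. Hence \<open>v\<close> pairs nontrivially with the oriented plane \<open>P\<close>,
  and rotating an orthogonal basis of \<open>P\<close> with equal norms until its second vector is
  orthogonal to \<open>v\<close> yields \<open>\<sigma>\<close>.

  For the mirror identity put \<open>c = \<langle>Re \<sigma>, v\<rangle>\<close>. In the coordinates \<open>x + s v + t v\<^sup>*\<close>, the map
  \<open>\<xi>\<close> sends the given basis of \<open>H\<^sub>2\<close> to \<open>c\<close> times the image of \<open>(Re \<sigma>\<^sup>\<or>, Im \<sigma>\<^sup>\<or>)\<close> under
  \<open>x \<mapsto> x - \<langle>x, B\<^sup>\<or>\<rangle> w\<close>, and the image of \<open>(Re \<sigma>, Im \<sigma>)\<close> under \<open>x \<mapsto> x - \<langle>x, B\<rangle> w\<close> to \<open>c\<close> times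
  the basis of the new \<open>H\<^sub>2\<close>; rescaling a basis by \<open>c \<noteq> 0\<close> does not change the oriented plane.\<close>

lemmas bilinear_rules = bilinear_ladd bilinear_radd bilinear_lmul bilinear_rmul
  bilinear_lneg bilinear_rneg bilinear_lzero bilinear_rzero bilinear_lsub bilinear_rsub

lemma bilinear_sum_left:
  assumes "bilinear q"
  shows "q (\<Sum>s\<in>S. f s) t = (\<Sum>s\<in>S. q (f s) t)"
proof -
  interpret linear "\<lambda>x. q x t" using assms by (simp add: bilinear_def)
  show ?thesis by (rule sum)
qed

lemma bilinear_sum_right:
  assumes "bilinear q"
  shows "q t (\<Sum>s\<in>S. f s) = (\<Sum>s\<in>S. q t (f s))"
proof -
  interpret linear "\<lambda>x. q t x" using assms by (simp add: bilinear_def)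
  show ?thesis by (rule sum)
qed

lemma orthogonal_family_sum_left:
  fixes q :: "'v::real_vector \<Rightarrow> 'v \<Rightarrow> real"
  assumes "bilinear q" and "finite S" and "t \<in> S"
    and orth: "\<forall>s\<in>S. \<forall>s'\<in>S. s \<noteq> s' \<longrightarrow> q s s' = 0"
  shows "q (\<Sum>s\<in>S. c s *\<^sub>R s) t = c t * q t t"
proof -
  have "q (\<Sum>s\<in>S. c s *\<^sub>R s) t = (\<Sum>s\<in>S. c s * q s t)"
    by (simp add: bilinear_sum_left[OF assms(1)] bilinear_lmul[OF assms(1)])
  also have "\<dots> = c t * q t t"
    using assms(2,3) orth by (subst sum.remove[of S t]) auto
  finally show ?thesis .
qed

lemma pos_def_sub_span_orthogonal_family:
  fixes q :: "'v::real_vector \<Rightarrow> 'v \<Rightarrow> real"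
  assumes bil: "bilinear q" and fin: "finite S"
    and orth: "\<forall>s\<in>S. \<forall>s'\<in>S. s \<noteq> s' \<longrightarrow> q s s' = 0" and pos: "\<forall>s\<in>S. q s s > 0"
  shows "pos_def_sub q (span S)" and "dim (span S) = card S"
proof -
  have norm: "q (\<Sum>s\<in>S. c s *\<^sub>R s) (\<Sum>s\<in>S. c s *\<^sub>R s) = (\<Sum>s\<in>S. c s * c s * q s s)" for c
    by (simp add: bilinear_sum_right[OF bil] bilinear_rmul[OF bil] mult.assoc
        orthogonal_family_sum_left[OF bil fin _ orth] cong: sum.cong)
  show "pos_def_sub q (span S)"
    unfolding pos_def_sub_def
  proof (intro conjI ballI impI)
    fix x assume "x \<in> span S" "x \<noteq> 0"
    then obtain c where x: "x = (\<Sum>s\<in>S. c s *\<^sub>R s)" by (auto simp: span_finite[OF fin])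
    with \<open>x \<noteq> 0\<close> obtain s where "s \<in> S" "c s \<noteq> 0" by (metis (no_types, lifting) scale_zero_left sum.neutral)
    then have "0 < (\<Sum>s\<in>S. c s * c s * q s s)"
      using fin pos by (intro sum_pos2[of S s]) (auto simp: zero_less_mult_iff less_le)
    then show "q x x > 0" by (simp add: x norm)
  qed (rule subspace_span)
  have "independent S"
  proof
    assume "dependent S"
    then obtain c s where "s \<in> S" "c s \<noteq> 0" "(\<Sum>s\<in>S. c s *\<^sub>R s) = 0"
      by (auto simp: dependent_finite[OF fin])
    then have "c s * q s s = 0"
      using orthogonal_family_sum_left[OF bil fin \<open>s \<in> S\<close> orth, of c] by (simp add: bilinear_lzero[OF bil])
    then show False using \<open>c s \<noteq> 0\<close> \<open>s \<in> S\<close> pos by fastforce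
  qed
  then show "dim (span S) = card S" by (rule dim_span_eq_card_independent)
qed

lemma orthogonal_family_residual:
  fixes q :: "'v::real_vector \<Rightarrow> 'v \<Rightarrow> real"
  assumes bil: "bilinear q" and fin: "finite S" and "t \<in> S"
    and orth: "\<forall>s\<in>S. \<forall>s'\<in>S. s \<noteq> s' \<longrightarrow> q s s' = 0" and pos: "\<forall>s\<in>S. q s s > 0"
  shows "q (y - (\<Sum>s\<in>S. (q y s / q s s) *\<^sub>R s)) t = 0"
  using orthogonal_family_sum_left[OF bil fin \<open>t \<in> S\<close> orth] pos \<open>t \<in> S\<close>
  by (simp add: bilinear_lsub[OF bil] less_imp_neq[symmetric])

lemma isotropic_perturbation_positive:
  fixes q :: "'v::real_vector \<Rightarrow> 'v \<Rightarrow> real"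
  assumes bil: "bilinear q" and sym: "\<forall>x y. q x y = q y x"
    and "q v v = 0" and "q v y \<noteq> 0"
  shows "\<exists>\<epsilon>. q (v + \<epsilon> *\<^sub>R y) (v + \<epsilon> *\<^sub>R y) > 0"
proof
  define k where "k = q v y"
  define t where "t = \<bar>q y y\<bar> + 1"
  have "t > 0" "2 * t + q y y > 0" by (simp_all add: t_def)
  have "k * k > 0" using \<open>q v y \<noteq> 0\<close> by (metis k_def not_real_square_gt_zero)
  have "q (v + (k / t) *\<^sub>R y) (v + (k / t) *\<^sub>R y) = 2 * (k / t) * k + (k / t) * (k / t) * q y y"
    using \<open>q v v = 0\<close> sym[rule_format, of y v] by (simp add: bilinear_rules[OF bil] k_def algebra_simps)
  also have "\<dots> = k * k * (2 * t + q y y) / (t * t)"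
    using \<open>t > 0\<close> by (simp add: field_simps)
  also have "\<dots> > 0"
    using \<open>t > 0\<close> \<open>2 * t + q y y > 0\<close> \<open>k * k > 0\<close> by simp
  finally show "q (v + (k / t) *\<^sub>R y) (v + (k / t) *\<^sub>R y) > 0" .
qed

lemma isotropic_not_orthogonal_to_maximal_positive_family:
  fixes q :: "'v::real_vector \<Rightarrow> 'v \<Rightarrow> real"
  assumes bil: "bilinear q" and sym: "\<forall>x y. q x y = q y x"
    and nondeg: "\<forall>x. (\<forall>y. q x y = 0) \<longrightarrow> x = 0"
    and maxdim: "\<forall>V. pos_def_sub q V \<longrightarrow> dim V \<le> card S"
    and fin: "finite S"
    and orth: "\<forall>s\<in>S. \<forall>s'\<in>S. s \<noteq> s' \<longrightarrow> q s s' = 0" and pos: "\<forall>s\<in>S. q s s > 0"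
    and "v \<noteq> 0" and "q v v = 0"
  shows "\<exists>s\<in>S. q v s \<noteq> 0"
proof (rule ccontr)
  assume "\<not> (\<exists>s\<in>S. q v s \<noteq> 0)"
  then have vS: "\<forall>s\<in>S. q v s = 0" by blast
  obtain y where "q v y \<noteq> 0" using nondeg \<open>v \<noteq> 0\<close> by blast
  define y' where "y' = y - (\<Sum>s\<in>S. (q y s / q s s) *\<^sub>R s)"
  have y'S: "\<forall>s\<in>S. q y' s = 0"
    unfolding y'_def using orthogonal_family_residual[OF bil fin _ orth pos] by blast
  have "q v y' = q v y"
    using vS by (simp add: y'_def bilinear_rules[OF bil] bilinear_sum_right[OF bil])
  then obtain \<epsilon> where zpos: "q (v + \<epsilon> *\<^sub>R y') (v + \<epsilon> *\<^sub>R y') > 0"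
    using isotropic_perturbation_positive[OF bil sym \<open>q v v = 0\<close>] \<open>q v y \<noteq> 0\<close> by metis
  define z where "z = v + \<epsilon> *\<^sub>R y'"
  have zS: "\<forall>s\<in>S. q z s = 0 \<and> q s z = 0"
    using vS y'S sym by (simp add: z_def bilinear_rules[OF bil])
  with zpos have "z \<notin> S" by (auto simp: z_def)
  have "pos_def_sub q (span (insert z S))" "dim (span (insert z S)) = card (insert z S)"
    using pos_def_sub_span_orthogonal_family[OF bil, of "insert z S"] fin orth pos zS zpos
    by (auto simp: z_def)
  then show False
    using maxdim fin \<open>z \<notin> S\<close> by fastforce
qed

lemma span_pair_obtain:
  assumes "x \<in> span {e1, e2}"
  obtains a b where "x = a *\<^sub>R e1 + b *\<^sub>R e2"
proof -
  obtain a where "x - a *\<^sub>R e1 \<in> span {e2}" using assms by (auto simp: span_insert)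
  then obtain b where "x - a *\<^sub>R e1 = b *\<^sub>R e2" by (auto simp: span_singleton)
  then show thesis by (intro that[of a b]) (simp add: algebra_simps)
qed

lemma oplane_basis_mem: "(e1, e2) \<in> oplane e1 e2"
  unfolding oplane_def by (intro CollectI case_prodI exI[of _ 1] exI[of _ 0]) simp

lemma oplane_change_basis_subset:
  assumes "a * d - b * c > 0"
  shows "oplane (a *\<^sub>R e1 + b *\<^sub>R e2) (c *\<^sub>R e1 + d *\<^sub>R e2) \<subseteq> oplane e1 e2"
proof
  fix f assume "f \<in> oplane (a *\<^sub>R e1 + b *\<^sub>R e2) (c *\<^sub>R e1 + d *\<^sub>R e2)"
  then obtain a' b' c' d' where
    f: "f = (a' *\<^sub>R (a *\<^sub>R e1 + b *\<^sub>R e2) + b' *\<^sub>R (c *\<^sub>R e1 + d *\<^sub>R e2),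
             c' *\<^sub>R (a *\<^sub>R e1 + b *\<^sub>R e2) + d' *\<^sub>R (c *\<^sub>R e1 + d *\<^sub>R e2))"
    and det': "a' * d' - b' * c' > 0"
    unfolding oplane_def by auto
  have "(a'*a + b'*c) * (c'*b + d'*d) - (a'*b + b'*d) * (c'*a + d'*c) = (a' * d' - b' * c') * (a * d - b * c)"
    by (simp add: algebra_simps)
  with det' assms have "(a'*a + b'*c) * (c'*b + d'*d) - (a'*b + b'*d) * (c'*a + d'*c) > 0"
    by simp
  then show "f \<in> oplane e1 e2"
    unfolding oplane_def f
    by (intro CollectI case_prodI exI[of _ "a'*a + b'*c"] exI[of _ "a'*b + b'*d"]
        exI[of _ "c'*a + d'*c"] exI[of _ "c'*b + d'*d"]) (simp add: algebra_simps)
qed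

lemma oplane_change_basis:
  assumes det: "a * d - b * c > 0"
  shows "oplane (a *\<^sub>R e1 + b *\<^sub>R e2) (c *\<^sub>R e1 + d *\<^sub>R e2) = oplane e1 e2"
proof
  define D where "D = a * d - b * c"
  define f1 where "f1 = a *\<^sub>R e1 + b *\<^sub>R e2"
  define f2 where "f2 = c *\<^sub>R e1 + d *\<^sub>R e2"
  have "D > 0" using det by (simp add: D_def)
  have "(d / D) *\<^sub>R f1 + (- b / D) *\<^sub>R f2 = ((d * a - b * c) / D) *\<^sub>R e1"
    by (simp add: f1_def f2_def algebra_simps diff_divide_distrib flip: scaleR_add_left)
  moreover have "(- c / D) *\<^sub>R f1 + (a / D) *\<^sub>R f2 = ((a * d - c * b) / D) *\<^sub>R e2"
    by (simp add: f1_def f2_def algebra_simps diff_divide_distrib flip: scaleR_add_left)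
  ultimately have "e1 = (d / D) *\<^sub>R f1 + (- b / D) *\<^sub>R f2" "e2 = (- c / D) *\<^sub>R f1 + (a / D) *\<^sub>R f2"
    using \<open>D > 0\<close> by (simp_all add: D_def mult.commute)
  moreover have "(d / D) * (a / D) - (- b / D) * (- c / D) = (a * d - b * c) / (D * D)"
    by (simp add: diff_divide_distrib)
  then have "(d / D) * (a / D) - (- b / D) * (- c / D) = 1 / D"
    using \<open>D > 0\<close> by (simp add: D_def)
  ultimately show "oplane e1 e2 \<subseteq> oplane f1 f2"
    using oplane_change_basis_subset[of "d / D" "a / D" "- b / D" "- c / D" f1 f2] \<open>D > 0\<close> by simp
qed (rule oplane_change_basis_subset[OF det])

lemma oplane_scaleR:
  assumes "k \<noteq> 0"
  shows "oplane (k *\<^sub>R e1) (k *\<^sub>R e2) = oplane e1 e2"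
proof -
  have "k * k > 0" using assms by (metis not_real_square_gt_zero)
  then show ?thesis using oplane_change_basis[of k k 0 0 e1 e2] by simp
qed

lemma map_oplane_linear:
  assumes "linear f"
  shows "map_oplane f (oplane e1 e2) = oplane (f e1) (f e2)"
proof (rule set_eqI, rule iffI)
  fix p assume "p \<in> map_oplane f (oplane e1 e2)"
  then obtain a b c d :: real where "p = (f (a *\<^sub>R e1 + b *\<^sub>R e2), f (c *\<^sub>R e1 + d *\<^sub>R e2))" "a * d - b * c > 0"
    unfolding map_oplane_def oplane_def by auto
  then show "p \<in> oplane (f e1) (f e2)"
    unfolding oplane_def by (auto simp: linear_add[OF assms] linear_scale[OF assms])
next
  fix p assume "p \<in> oplane (f e1) (f e2)"
  then obtain a b c d :: real where p: "p = (a *\<^sub>R f e1 + b *\<^sub>R f e2, c *\<^sub>R f e1 + d *\<^sub>R f e2)"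
    and det: "a * d - b * c > 0"
    unfolding oplane_def by auto
  have "(a *\<^sub>R e1 + b *\<^sub>R e2, c *\<^sub>R e1 + d *\<^sub>R e2) \<in> oplane e1 e2"
    using det unfolding oplane_def by blast
  then show "p \<in> map_oplane f (oplane e1 e2)"
    unfolding map_oplane_def p by (force simp: linear_add[OF assms] linear_scale[OF assms])
qed

lemma perp_oplane_iff:
  assumes "bilinear q"
  shows "perp_oplane q x (oplane e1 e2) \<longleftrightarrow> q x e1 = 0 \<and> q x e2 = 0"
  using oplane_basis_mem[of e1 e2]
  unfolding perp_oplane_def oplane_def by (fastforce simp: bilinear_rules[OF assms])

lemma pos_oplane_conformal_basis:
  fixes q :: "'v::real_vector \<Rightarrow> 'v \<Rightarrow> real"
  assumes bil: "bilinear q" and sym: "\<forall>x y. q x y = q y x"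
    and "q e1 e1 > 0" and "q e2 e2 = q e1 e1" and "q e1 e2 = 0"
  shows "pos_oplane q (oplane e1 e2)"
proof -
  have norm: "q (a *\<^sub>R e1 + b *\<^sub>R e2) (a *\<^sub>R e1 + b *\<^sub>R e2) = (a * a + b * b) * q e1 e1" for a b
    using assms(3-5) sym[rule_format, of e2 e1] by (simp add: bilinear_rules[OF bil] algebra_simps)
  have pos: "q (a *\<^sub>R e1 + b *\<^sub>R e2) (a *\<^sub>R e1 + b *\<^sub>R e2) > 0" if "a \<noteq> 0 \<or> b \<noteq> 0" for a b
    using that \<open>q e1 e1 > 0\<close> by (simp add: norm sum_squares_gt_zero_iff)
  have "\<forall>a b. a *\<^sub>R e1 + b *\<^sub>R e2 = 0 \<longrightarrow> a = 0 \<and> b = 0"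
    using pos by (metis bilinear_rzero[OF bil] less_irrefl)
  moreover have "\<forall>x\<in>span {e1, e2}. x \<noteq> 0 \<longrightarrow> q x x > 0"
  proof (intro ballI impI)
    fix x assume "x \<in> span {e1, e2}" and "x \<noteq> 0"
    from \<open>x \<in> span {e1, e2}\<close> obtain a b where "x = a *\<^sub>R e1 + b *\<^sub>R e2"
      by (rule span_pair_obtain)
    moreover from this \<open>x \<noteq> 0\<close> have "a \<noteq> 0 \<or> b \<noteq> 0" by auto
    ultimately show "q x x > 0" using pos by simp
  qed
  ultimately show ?thesis
    unfolding pos_oplane_def by blast
qed

lemma pos_oplane_obtain_conformal_basis:
  fixes q :: "'v::real_vector \<Rightarrow> 'v \<Rightarrow> real"
  assumes bil: "bilinear q" and sym: "\<forall>x y. q x y = q y x" and "pos_oplane q P"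
  obtains e1 e2 where "P = oplane e1 e2" "q e1 e1 > 0" "q e2 e2 = q e1 e1" "q e1 e2 = 0"
proof -
  obtain f1 f2 where indep: "\<forall>a b. a *\<^sub>R f1 + b *\<^sub>R f2 = 0 \<longrightarrow> a = 0 \<and> b = 0"
    and P: "P = oplane f1 f2" and pos: "\<forall>x\<in>span {f1, f2}. x \<noteq> 0 \<longrightarrow> q x x > 0"
    using \<open>pos_oplane q P\<close> unfolding pos_oplane_def by blast
  have posq: "q (a *\<^sub>R f1 + b *\<^sub>R f2) (a *\<^sub>R f1 + b *\<^sub>R f2) > 0" if "a \<noteq> 0 \<or> b \<noteq> 0" for a b
    using pos indep that by (meson span_add span_base span_scale insertI1 insertI2 singletonI)
  have "q f1 f1 > 0" using posq[of 1 0] by simp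
  define \<mu> where "\<mu> = q f1 f2 / q f1 f1"
  define u where "u = (- \<mu>) *\<^sub>R f1 + 1 *\<^sub>R f2"
  have "q f1 u = 0" using \<open>q f1 f1 > 0\<close> by (simp add: u_def \<mu>_def bilinear_rules[OF bil])
  have "q u u > 0" unfolding u_def by (rule posq) simp
  define r where "r = sqrt (q f1 f1 / q u u)"
  have "r > 0" "r * r = q f1 f1 / q u u"
    using \<open>q f1 f1 > 0\<close> \<open>q u u > 0\<close> by (simp_all add: r_def)
  show thesis
  proof (rule that[of f1 "r *\<^sub>R u"])
    have "oplane (1 *\<^sub>R f1 + 0 *\<^sub>R f2) ((- r * \<mu>) *\<^sub>R f1 + r *\<^sub>R f2) = oplane f1 f2"
      using \<open>r > 0\<close> by (intro oplane_change_basis) simp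
    then show "P = oplane f1 (r *\<^sub>R u)" by (simp add: P u_def algebra_simps)
    show "q (r *\<^sub>R u) (r *\<^sub>R u) = q f1 f1"
      using \<open>r * r = q f1 f1 / q u u\<close> \<open>q u u > 0\<close> by (simp add: bilinear_rules[OF bil] mult.assoc[symmetric])
  qed (use \<open>q f1 f1 > 0\<close> \<open>q f1 u = 0\<close> in \<open>simp_all add: bilinear_rules[OF bil]\<close>)
qed

lemma bilinear_gam_form:
  assumes "bilinear g"
  shows "bilinear (gam_form g)"
  unfolding bilinear_def
  by (auto intro!: linearI simp: gam_form_def bilinear_rules[OF assms] algebra_simps)

lemma gam_form_commute:
  assumes "\<forall>x y. g x y = g y x"
  shows "\<forall>x y. gam_form g x y = gam_form g y x"
  using assms by (simp add: gam_form_def)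

lemma gam_form_Pair: "gam_form g (x, s, t) (x', s', t') = g x x' + s * t' + t * s'"
  by (simp add: gam_form_def)

lemma gam_form_vv:
  assumes "bilinear g"
  shows "gam_form g u vv = snd (snd u)"
  by (simp add: gam_form_def vv_def bilinear_rzero[OF assms])

lemma linear_xi: "linear xi"
  by (rule linearI) (simp_all add: xi_def prod_eq_iff)

lemma gamma_oplane:
  assumes "bilinear g"
  shows "gamma g ((oplane e1 e2, \<omega>), B) =
    (oplane (incl e1 - gam_form g e1 B *\<^sub>R ww) (incl e2 - gam_form g e2 B *\<^sub>R ww),
     oplane ((1/2 * (gam_form g \<omega> \<omega> - gam_form g B B)) *\<^sub>R ww + ws + incl B)
            (incl \<omega> - gam_form g \<omega> B *\<^sub>R ww))"
proof -
  have "linear (\<lambda>x. incl x - gam_form g x B *\<^sub>R ww)"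
    by (rule linearI)
      (simp_all add: incl_def ww_def bilinear_rules[OF bilinear_gam_form[OF assms]] algebra_simps)
  then show ?thesis by (simp add: gamma_def Let_def map_oplane_linear)
qed

lemma mirror_oplane:
  "mirror (oplane e1 e2, oplane f1 f2) = (oplane (xi f1) (xi f2), oplane (xi e1) (xi e2))"
  by (simp add: mirror_def map_oplane_linear[OF linear_xi])

lemma exists_period_adapted_to_v:
  fixes g :: "'a::real_vector \<Rightarrow> 'a \<Rightarrow> real"
  assumes bil: "bilinear g" and sym: "\<forall>x y. g x y = g y x"
    and nondeg: "\<forall>x. (\<forall>y. gam_form g x y = 0) \<longrightarrow> x = 0"
    and maxpos: "\<forall>V. pos_def_sub (gam_form g) V \<longrightarrow> dim V \<le> 3"
    and Gr: "(P, \<omega>) \<in> Gr21 (gam_form g)" and "snd (snd \<omega>) = 0"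
  shows "\<exists>\<sigma>. period_ok (gam_form g) \<sigma> \<and> P = P_sigma \<sigma> \<and>
             gam_form g (snd \<sigma>) vv = 0 \<and> gam_form g (fst \<sigma>) vv \<noteq> 0"
proof -
  let ?q = "gam_form g"
  note bilq = bilinear_gam_form[OF bil] and symq = gam_form_commute[OF sym]
  have "pos_oplane ?q P" using Gr by (simp add: Gr21_def)
  then obtain e1 e2 where P: "P = oplane e1 e2" and e: "?q e1 e1 > 0" "?q e2 e2 = ?q e1 e1" "?q e1 e2 = 0"
    by (rule pos_oplane_obtain_conformal_basis[OF bilq symq])
  have \<omega>: "?q \<omega> e1 = 0" "?q \<omega> e2 = 0" "?q \<omega> \<omega> > 0"
    using Gr by (simp_all add: Gr21_def P perp_oplane_iff[OF bilq])
  define a b where "a = ?q e1 vv" and "b = ?q e2 vv"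
  have "\<exists>s\<in>{e1, e2, \<omega>}. ?q vv s \<noteq> 0"
  proof (rule isotropic_not_orthogonal_to_maximal_positive_family[OF bilq symq nondeg])
    have "e1 \<noteq> e2" "e1 \<noteq> \<omega>" "e2 \<noteq> \<omega>" using e \<omega> by auto
    then show "\<forall>V. pos_def_sub ?q V \<longrightarrow> dim V \<le> card {e1, e2, \<omega>}"
      using maxpos by (simp add: numeral_3_eq_3)
    show "\<forall>s\<in>{e1, e2, \<omega>}. \<forall>s'\<in>{e1, e2, \<omega>}. s \<noteq> s' \<longrightarrow> ?q s s' = 0"
      using e \<omega> symq by (auto simp del: split_paired_All)
  qed (use e \<omega> in \<open>simp_all add: gam_form_Pair vv_def zero_prod_def bilinear_rzero[OF bil]\<close>)
  moreover have "?q vv \<omega> = 0" using \<open>snd (snd \<omega>) = 0\<close> symq gam_form_vv[OF bil] by metis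
  ultimately have "a * a + b * b > 0"
    using symq by (auto simp: a_def b_def sum_squares_gt_zero_iff simp del: split_paired_All)
  define \<sigma> where "\<sigma> = (a *\<^sub>R e1 + b *\<^sub>R e2, (- b) *\<^sub>R e1 + a *\<^sub>R e2)"
  have norms: "?q (fst \<sigma>) (fst \<sigma>) = (a * a + b * b) * ?q e1 e1"
    "?q (snd \<sigma>) (snd \<sigma>) = (a * a + b * b) * ?q e1 e1" "?q (fst \<sigma>) (snd \<sigma>) = 0"
    using e symq[rule_format, of e2 e1] by (simp_all add: \<sigma>_def bilinear_rules[OF bilq] algebra_simps)
  show ?thesis
  proof (intro exI[of _ \<sigma>] conjI)
    show "period_ok ?q \<sigma>"
      using norms symq[rule_format, of "snd \<sigma>" "fst \<sigma>"] \<open>a * a + b * b > 0\<close> e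
      by (simp add: period_ok_def cform_def complex_eq_iff bilinear_rules[OF bilq])
    show "P = P_sigma \<sigma>"
      using oplane_change_basis[of a a b "- b" e1 e2] \<open>a * a + b * b > 0\<close>
      by (simp add: P P_sigma_def \<sigma>_def)
    have "?q (fst \<sigma>) vv = a * a + b * b" "?q (snd \<sigma>) vv = 0"
      by (simp_all add: \<sigma>_def a_def b_def bilinear_rules[OF bilq] algebra_simps)
    then show "?q (snd \<sigma>) vv = 0" "?q (fst \<sigma>) vv \<noteq> 0"
      using \<open>a * a + b * b > 0\<close> by linarith+
  qed
qed

lemma dual_in_Gr21:
  fixes g :: "'a::real_vector \<Rightarrow> 'a \<Rightarrow> real"
  assumes bil: "bilinear g" and sym: "\<forall>x y. g x y = g y x"
    and "c \<noteq> 0" and "g y y > 0" and "g x' x' > 0" and "g y x' = 0"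
  shows "(P_sigma ((1/c) *\<^sub>R (b, (g y y - g b b) / 2, 1), (1/c) *\<^sub>R (y, - g b y, 0)),
           (1/c) *\<^sub>R (x', - g x' b, 0)) \<in> Gr21 (gam_form g)"
proof -
  let ?q = "gam_form g"
  define R I w where "R = (1/c) *\<^sub>R (b, (g y y - g b b) / 2, 1::real)"
    and "I = (1/c) *\<^sub>R (y, - g b y, 0::real)" and "w = (1/c) *\<^sub>R (x', - g x' b, 0::real)"
  note simps = gam_form_Pair bilinear_rules[OF bil] field_simps
  have "?q R R = g y y / (c * c)" "?q I I = g y y / (c * c)" "?q R I = 0"
    using \<open>c \<noteq> 0\<close> by (simp_all add: R_def I_def simps)
  moreover have "?q w R = 0" "?q w I = 0" "?q w w = g x' x' / (c * c)"
    using \<open>c \<noteq> 0\<close> \<open>g y x' = 0\<close> sym by (simp_all add: R_def I_def w_def simps)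
  moreover have "c * c > 0" using \<open>c \<noteq> 0\<close> by (metis not_real_square_gt_zero)
  ultimately have "pos_oplane ?q (oplane R I)" "perp_oplane ?q w (oplane R I)" "?q w w > 0"
    using assms(4,5)
    by (simp_all add: pos_oplane_conformal_basis[OF bilinear_gam_form[OF bil] gam_form_commute[OF sym]]
        perp_oplane_iff[OF bilinear_gam_form[OF bil]])
  then show ?thesis by (simp add: Gr21_def P_sigma_def R_def I_def w_def)
qed

lemma mirror_gamma_dual:
  fixes g :: "'a::real_vector \<Rightarrow> 'a \<Rightarrow> real"
  assumes bil: "bilinear g" and sym: "\<forall>x y. g x y = g y x" and "c \<noteq> 0"
    and period: "g x x + 2 * s * c = g x' x'" "g x x' + c * s' = 0"
    and perp: "g y x + t * c = 0" "g y x' = 0"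
  shows "mirror (gamma g ((oplane (x, s, c) (x', s', 0), (y, t, 0)), (b, r, 0))) =
         gamma g ((oplane ((1/c) *\<^sub>R (b, (g y y - g b b) / 2, 1)) ((1/c) *\<^sub>R (y, - g b y, 0)),
                   (1/c) *\<^sub>R (x', - g x' b, 0)), (1/c) *\<^sub>R (x, - (g x b + c * r), 0))"
proof -
  let ?q = "gam_form g"
  define R I w B' where "R = (1/c) *\<^sub>R (b, (g y y - g b b) / 2, 1::real)"
    and "I = (1/c) *\<^sub>R (y, - g b y, 0::real)" and "w = (1/c) *\<^sub>R (x', - g x' b, 0::real)"
    and "B' = (1/c) *\<^sub>R (x, - (g x b + c * r), 0::real)"
  define F F' where "F u = incl u - ?q u (b, r, 0) *\<^sub>R ww"
    and "F' u = incl u - ?q u B' *\<^sub>R ww" for u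
  define h1 h2 where "h1 = (1/2 * (?q (y, t, 0) (y, t, 0) - ?q (b, r, 0) (b, r, 0))) *\<^sub>R ww + ws + incl (b, r, 0)"
    and "h2 = incl (y, t, 0) - ?q (y, t, 0) (b, r, 0) *\<^sub>R ww"
  define h1' h2' where "h1' = (1/2 * (?q w w - ?q B' B')) *\<^sub>R ww + ws + incl B'"
    and "h2' = incl w - ?q w B' *\<^sub>R ww"
  note simps = xi_def incl_def ww_def ws_def gam_form_Pair bilinear_rules[OF bil] field_simps
  have "xi h1 = c *\<^sub>R F' R" "xi h2 = c *\<^sub>R F' I"
    using \<open>c \<noteq> 0\<close> sym perp by (simp_all add: h1_def h2_def F'_def R_def I_def B'_def simps)
  moreover have "xi (F (x, s, c)) = c *\<^sub>R h1'"
    using \<open>c \<noteq> 0\<close> period(1)[symmetric] by (simp add: h1'_def F_def w_def B'_def simps)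
  moreover have "xi (F (x', s', 0)) = c *\<^sub>R h2'"
    using \<open>c \<noteq> 0\<close> sym period(2) by (simp add: h2'_def F_def w_def B'_def simps)
  ultimately show ?thesis
    using \<open>c \<noteq> 0\<close>
    by (simp add: gamma_oplane[OF bil] mirror_oplane oplane_scaleR
        F_def F'_def h1_def h2_def h1'_def h2'_def R_def I_def w_def B'_def)
qed

lemma mirror_gamma_eq_gamma_dual:
  fixes g :: "'a::real_vector \<Rightarrow> 'a \<Rightarrow> real"
  assumes bil: "bilinear g" and sym: "\<forall>x y. g x y = g y x"
    and Gr: "(P, \<omega>) \<in> Gr21 (gam_form g)" and "snd (snd \<omega>) = 0" and "snd (snd B) = 0"
    and period: "period_ok (gam_form g) \<sigma>" and P: "P = P_sigma \<sigma>"
    and "gam_form g (snd \<sigma>) vv = 0" and "gam_form g (fst \<sigma>) vv \<noteq> 0"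
  shows "let c = gam_form g (fst \<sigma>) vv;
             Bw = (B, \<omega>);
             \<sigma>v = cscale (complex_of_real (1 / c))
                    (cpr Bw - cscale (cform (gam_form g) Bw Bw / 2) (creal vv) + creal vs);
             Bwv = cscale (complex_of_real (1 / c))
                    (cpr \<sigma> - cscale (cform (gam_form g) \<sigma> (creal B)) (creal vv));
             Bv = fst Bwv; \<omega>v = snd Bwv
         in (P_sigma \<sigma>v, \<omega>v) \<in> Gr21 (gam_form g)
            \<and> mirror (gamma g ((P, \<omega>), B)) = gamma g ((P_sigma \<sigma>v, \<omega>v), Bv)
            \<and> mirror (gamma g ((P, \<omega>), B)) \<in> gamma g ` (Gr21 (gam_form g) \<times> UNIV)"
proof -
  let ?q = "gam_form g"
  obtain x s c x' s' where \<sigma>: "\<sigma> = ((x, s, c), (x', s', 0))"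
    using \<open>?q (snd \<sigma>) vv = 0\<close> gam_form_vv[OF bil] by (metis prod.collapse)
  obtain b r where B: "B = (b, r, 0)" using \<open>snd (snd B) = 0\<close> by (metis prod.collapse)
  obtain y t where \<omega>: "\<omega> = (y, t, 0)" using \<open>snd (snd \<omega>) = 0\<close> by (metis prod.collapse)
  have "c \<noteq> 0" using \<open>?q (fst \<sigma>) vv \<noteq> 0\<close> by (simp add: \<sigma> gam_form_vv[OF bil])
  note simps = gam_form_Pair bilinear_rules[OF bil]
  have "g x x + 2 * s * c = g x' x'" "g x x' + c * s' = 0" "g x x + 2 * s * c > 0"
    using period sym by (simp_all add: period_ok_def cform_def complex_eq_iff \<sigma> simps algebra_simps)
  moreover have "g y x + t * c = 0" "g y x' = 0" "g y y > 0"
    using Gr oplane_basis_mem[of "fst \<sigma>" "snd \<sigma>"]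
    by (auto simp: Gr21_def perp_oplane_def P P_sigma_def \<sigma> \<omega> gam_form_Pair)
  moreover have
    "cscale (complex_of_real (1 / ?q (fst \<sigma>) vv))
        (cpr (B, \<omega>) - cscale (cform ?q (B, \<omega>) (B, \<omega>) / 2) (creal vv) + creal vs)
      = ((1/c) *\<^sub>R (b, (g y y - g b b) / 2, 1), (1/c) *\<^sub>R (y, - g b y, 0))"
    "cscale (complex_of_real (1 / ?q (fst \<sigma>) vv))
        (cpr \<sigma> - cscale (cform ?q \<sigma> (creal B)) (creal vv))
      = ((1/c) *\<^sub>R (x, - (g x b + c * r), 0), (1/c) *\<^sub>R (x', - g x' b, 0))"
    using \<open>c \<noteq> 0\<close> sym
    by (simp_all add: \<sigma> B \<omega> cscale_def cpr_def pr_def creal_def cform_def vv_def vs_def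
        simps bilinear_rzero[OF bilinear_gam_form[OF bil]] field_simps)
  ultimately show ?thesis
    using dual_in_Gr21[OF bil sym \<open>c \<noteq> 0\<close>] mirror_gamma_dual[OF bil sym \<open>c \<noteq> 0\<close>]
    by (auto simp: Let_def P P_sigma_def \<sigma> B \<omega>)
qed

theorem mainTheorem14:
  fixes g :: "'a::euclidean_space \<Rightarrow> 'a \<Rightarrow> real"
    and P :: "('a gam \<times> 'a gam) set" and \<omega> B :: "'a gam"
  assumes "bilinear g" and "\<forall>x y. g x y = g y x"
    and "has_signature (gam_form g) 3 (DIM('a gam) - 3)"
    and "(P, \<omega>) \<in> Gr21 (gam_form g)"
    and "snd (snd \<omega>) = 0" and "snd (snd B) = 0"
  shows "(\<exists>\<sigma>. period_ok (gam_form g) \<sigma> \<and> P = P_sigma \<sigma> \<and>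
              gam_form g (snd \<sigma>) vv = 0 \<and> gam_form g (fst \<sigma>) vv \<noteq> 0)
       \<and> (\<forall>\<sigma>. period_ok (gam_form g) \<sigma> \<and> P = P_sigma \<sigma> \<and>
              gam_form g (snd \<sigma>) vv = 0 \<and> gam_form g (fst \<sigma>) vv \<noteq> 0 \<longrightarrow>
           (let c = gam_form g (fst \<sigma>) vv;
                Bw = (B, \<omega>);
                \<sigma>v = cscale (complex_of_real (1 / c))
                       (cpr Bw - cscale (cform (gam_form g) Bw Bw / 2) (creal vv) + creal vs);
                Bwv = cscale (complex_of_real (1 / c))
                       (cpr \<sigma> - cscale (cform (gam_form g) \<sigma> (creal B)) (creal vv));
                Bv = fst Bwv; \<omega>v = snd Bwv
            in (P_sigma \<sigma>v, \<omega>v) \<in> Gr21 (gam_form g)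
               \<and> mirror (gamma g ((P, \<omega>), B)) = gamma g ((P_sigma \<sigma>v, \<omega>v), Bv)
               \<and> mirror (gamma g ((P, \<omega>), B)) \<in> gamma g ` (Gr21 (gam_form g) \<times> UNIV)))"
proof -
  have "\<forall>x. (\<forall>y. gam_form g x y = 0) \<longrightarrow> x = 0"
    and "\<forall>V. pos_def_sub (gam_form g) V \<longrightarrow> dim V \<le> 3"
    using assms(3) unfolding has_signature_def by blast+
  then show ?thesis
    using exists_period_adapted_to_v[OF assms(1,2) _ _ assms(4,5)]
      mirror_gamma_eq_gamma_dual[OF assms(1,2,4,5,6)] by blast
qed

end
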